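(* Let $c \in \mathbb{Z}$ with $c \equiv 1 \pmod 4$. Fix an algebraic closure $\overline{\mathbb{Q}}_2$ of $\mathbb{Q}_2$, an element $\delta \in \overline{\mathbb{Q}}_2$ with $\delta^2 = -c$, and elements $\alpha, \beta \in \overline{\mathbb{Q}}_2$ with $\alpha^2 = -c + \delta$ and $\beta^2 = -c - \delta$. Let $L_c = \mathbb{Q}_2(\alpha,\beta)$ (the splitting field over $\mathbb{Q}_2$ of $(x^2+c)^2+c$), and let $v_\pi$ be the valuation on $L_c$ normalized so that $v_\pi(2) = 8$. Then $v_\pi(\alpha + \alpha\beta + \beta) = 6$.
   Context: For $c \equiv 1 \pmod 4$, the extension $L_c/\mathbb{Q}_2$ is totally ramified of degree $8$, so $v_\pi$ is the normalized valuation associated to a uniformizer $\pi$ of $L_c$, and $v_\pi(x) = 8 v_2(x)$ where $v_2$ is the $2$-adic valuation extended to $\overline{\mathbb{Q}}_2$. *)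

theory Defs
  imports Complex_Main
begin

definition nonarch_valuation :: "('a::field \<Rightarrow> real) \<Rightarrow> bool" where
  "nonarch_valuation v \<longleftrightarrow>
     (\<forall>x y. x \<noteq> 0 \<longrightarrow> y \<noteq> 0 \<longrightarrow> v (x * y) = v x + v y) \<and>
     (\<forall>x y. x \<noteq> 0 \<longrightarrow> y \<noteq> 0 \<longrightarrow> x + y \<noteq> 0 \<longrightarrow> min (v x) (v y) \<le> v (x + y))"

end

theory Submission
  imports Defs
begin

text \<open>Put \<open>p = \<alpha>\<beta>\<close> and \<open>s = \<alpha> + \<beta>\<close>. Then \<open>p\<^sup>2 = c(c + 1)\<close> and \<open>s\<^sup>2 = 2(p - c)\<close>. As \<open>c\<close>
  and \<open>(c + 1)/2\<close> are odd, \<open>v p = e/2\<close> where \<open>e = v 2\<close>. Moreover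
  \<open>(s + p)(s - p) = s\<^sup>2 - p\<^sup>2 = 2p - c(c + 3)\<close>, and \<open>4 | c + 3\<close> makes the second term negligible, so
  \<open>v (s + p) + v (s - p) = 3e/2\<close>. As the difference \<open>2p\<close> of the two factors has valuation
  \<open>3e/2 \<ge> 3e/4\<close>, both factors have valuation \<open>3e/4\<close>, which is \<open>6\<close> for \<open>e = 8\<close>.\<close>

lemma valuation_mult:
  "nonarch_valuation v \<Longrightarrow> x \<noteq> 0 \<Longrightarrow> y \<noteq> 0 \<Longrightarrow> v (x * y) = v x + v y"
  unfolding nonarch_valuation_def by blast

lemma valuation_ultrametric:
  "nonarch_valuation v \<Longrightarrow> x \<noteq> 0 \<Longrightarrow> y \<noteq> 0 \<Longrightarrow> x + y \<noteq> 0 \<Longrightarrow> min (v x) (v y) \<le> v (x + y)"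
  unfolding nonarch_valuation_def by blast

lemma valuation_one: "nonarch_valuation v \<Longrightarrow> v (1::'a::field) = 0"
  using valuation_mult[of v "1::'a" 1] by simp

lemma valuation_minus:
  assumes v: "nonarch_valuation v" and x: "(x::'a::field) \<noteq> 0"
  shows "v (- x) = v x"
proof -
  have "v (- 1 :: 'a) = 0"
    using valuation_mult[OF v, of "-1::'a" "-1"] valuation_one[OF v] by simp
  then show ?thesis
    using valuation_mult[OF v, of "-1" x] x by simp
qed

lemma valuation_power:
  assumes v: "nonarch_valuation v" and x: "(x::'a::field) \<noteq> 0"
  shows "v (x ^ n) = n * v x"
  by (induction n) (simp_all add: valuation_one[OF v] valuation_mult[OF v] x algebra_simps)

lemma valuation_add_less:
  assumes v: "nonarch_valuation v" and x: "(x::'a::field) \<noteq> 0" and y: "y \<noteq> 0"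
    and less: "v x < v y"
  shows "x + y \<noteq> 0 \<and> v (x + y) = v x"
proof -
  have xy: "x + y \<noteq> 0"
  proof
    assume "x + y = 0"
    then have "y = - x" by (metis add.commute add_eq_0_iff)
    then show False using less valuation_minus[OF v x] by simp
  qed
  have "min (v x) (v y) \<le> v (x + y)"
    using valuation_ultrametric[OF v x y xy] .
  moreover have "min (v (x + y)) (v (- y)) \<le> v x"
    using valuation_ultrametric[OF v xy, of "- y"] x y by simp
  ultimately show ?thesis
    using xy less valuation_minus[OF v y] by linarith
qed

text \<open>Otherwise the smaller of the two valuations would be the valuation of the difference.\<close>

lemma valuation_eq_mean_if_close:
  assumes v: "nonarch_valuation v" and x: "(x::'a::field) \<noteq> 0" and y: "y \<noteq> 0"
    and xy: "x - y \<noteq> 0" and mean: "v x + v y = 2 * t" and close: "t \<le> v (x - y)"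
  shows "v x = t"
proof (rule ccontr)
  assume "v x \<noteq> t"
  then consider "v x < v (- y)" | "v (- y) < v x"
    using mean valuation_minus[OF v y] by fastforce
  then show False
  proof cases
    case 1
    then have "v (x - y) = v x"
      using valuation_add_less[OF v x _ 1] y by simp
    then show ?thesis using 1 mean close valuation_minus[OF v y] by linarith
  next
    case 2
    then have "v (x - y) = v (- y)"
      using valuation_add_less[OF v _ x 2] y by (simp add: add.commute)
    then show ?thesis using 2 mean close valuation_minus[OF v y] by linarith
  qed
qed

lemma valuation_of_nat_nonneg:
  assumes v: "nonarch_valuation v" and n: "n \<noteq> 0"
  shows "0 \<le> v (of_nat n :: 'a::field_char_0)"
  using n
proof (induction n)
  case 0
  then show ?case by simp
next
  case (Suc n)
  show ?case
  proof (cases "n = 0")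
    case True
    then show ?thesis using valuation_one[OF v] by simp
  next
    case False
    have "min (v (of_nat n :: 'a)) (v 1) \<le> v (of_nat n + 1 :: 'a)"
      by (rule valuation_ultrametric[OF v])
         (use False of_nat_neq_0[of n, where 'a='a] in \<open>auto simp: add.commute\<close>)
    then show ?thesis using Suc False valuation_one[OF v] by (simp add: add.commute)
  qed
qed

lemma valuation_of_int_nonneg:
  assumes v: "nonarch_valuation v" and n: "n \<noteq> 0"
  shows "0 \<le> v (of_int n :: 'a::field_char_0)"
proof (cases "0 \<le> n")
  case True
  then show ?thesis
    using valuation_of_nat_nonneg[OF v, of "nat n"] n by simp
next
  case False
  then have "(of_int n :: 'a) = - of_nat (nat (- n))" by simp
  then show ?thesis
    using valuation_of_nat_nonneg[OF v, of "nat (- n)"] valuation_minus[OF v] False by simp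
qed

lemma valuation_of_int_dvd:
  assumes v: "nonarch_valuation v" and n: "n \<noteq> 0" and dvd: "2 ^ k dvd n"
  shows "k * v 2 \<le> v (of_int n :: 'a::field_char_0)"
proof -
  obtain m where nm: "n = 2 ^ k * m" using dvd by blast
  with n have m: "m \<noteq> 0" by simp
  have "v (of_int n :: 'a) = k * v 2 + v (of_int m :: 'a)"
    using nm m valuation_mult[OF v, of "2 ^ k" "of_int m"] valuation_power[OF v, of 2 k] by simp
  then show ?thesis using valuation_of_int_nonneg[OF v m] by simp
qed

lemma valuation_of_int_odd:
  assumes v: "nonarch_valuation v" and v2: "0 < v (2::'a::field_char_0)" and odd: "odd n"
  shows "v (of_int n :: 'a) = 0"
proof (rule ccontr)
  assume "v (of_int n :: 'a) \<noteq> 0"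
  with odd have pos: "0 < v (of_int n :: 'a)"
    using valuation_of_int_nonneg[OF v, of n] by fastforce
  then have "n \<noteq> 1" using valuation_one[OF v] by auto
  define e where "e = 1 - n"
  have e: "e \<noteq> 0" and "2 dvd e" using odd \<open>n \<noteq> 1\<close> by (auto simp: e_def)
  then have "v 2 \<le> v (of_int e :: 'a)"
    using valuation_of_int_dvd[OF v e, of 1] by simp
  moreover have "min (v (of_int n :: 'a)) (v (of_int e :: 'a)) \<le> v (of_int n + of_int e :: 'a)"
    by (rule valuation_ultrametric[OF v]) (use odd e in \<open>auto simp: e_def\<close>)
  ultimately show False
    using pos v2 valuation_one[OF v] by (simp add: e_def)
qed

lemma valuation_sqrt_mult_succ:
  fixes c :: int and v :: "'a::field_char_0 \<Rightarrow> real" and p :: 'a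
  assumes c: "c mod 4 = 1" and v: "nonarch_valuation v" and v2: "0 < v 2"
    and p: "p\<^sup>2 = of_int c * of_int (c + 1)"
  shows "p \<noteq> 0 \<and> 2 * v p = v 2"
proof -
  have "odd c" using c by presburger
  then have c0: "(of_int c :: 'a) \<noteq> 0" and vc: "v (of_int c :: 'a) = 0"
    using valuation_of_int_odd[OF v v2] by auto
  define m where "m = (c + 1) div 2"
  have m: "c + 1 = 2 * m" and "odd m" using c by (simp_all add: m_def) presburger+
  then have "(of_int m :: 'a) \<noteq> 0" and "v (of_int m :: 'a) = 0"
    using valuation_of_int_odd[OF v v2] by auto
  then have c1: "(of_int (c + 1) :: 'a) \<noteq> 0" and vc1: "v (of_int (c + 1) :: 'a) = v 2"
    using m valuation_mult[OF v, of 2 "of_int m"] by simp_all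
  have p0: "p \<noteq> 0" using p c0 c1 by auto
  then show ?thesis
    using arg_cong[OF p, of v] valuation_power[OF v p0, of 2] valuation_mult[OF v c0 c1] vc vc1
    by simp
qed

lemma valuation_sum_plus_product:
  fixes c :: int and v :: "'a::field_char_0 \<Rightarrow> real" and s p :: 'a
  assumes c: "c mod 4 = 1" and v: "nonarch_valuation v" and v2: "0 < v 2"
    and p: "p\<^sup>2 = of_int c * of_int (c + 1)" and s: "s\<^sup>2 = 2 * (p - of_int c)"
  shows "s + p \<noteq> 0 \<and> 4 * v (s + p) = 3 * v 2"
proof -
  have p0: "p \<noteq> 0" and vp: "2 * v p = v 2"
    using valuation_sqrt_mult_succ[OF c v v2 p] by auto
  have v2p: "2 * v (2 * p) = 3 * v 2"
    using valuation_mult[OF v, of 2 p] p0 vp by simp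
  define q :: 'a where "q = of_int (c * (c + 3))"
  have prod: "(s + p) * (s - p) = 2 * p + - q"
    using s p by (simp add: q_def algebra_simps power2_eq_square)
  have "2 * p + - q \<noteq> 0 \<and> v (2 * p + - q) = v (2 * p)"
  proof (cases "q = 0")
    case True
    then show ?thesis using p0 by simp
  next
    case False
    have "4 dvd c + 3" using c by presburger
    then have "2 ^ 2 dvd c * (c + 3)" by simp
    moreover have "c * (c + 3) \<noteq> 0" using False unfolding q_def by (metis of_int_0)
    ultimately have "2 * v 2 \<le> v q"
      using valuation_of_int_dvd[OF v, of "c * (c + 3)" 2] unfolding q_def by simp
    then have "v (2 * p) < v (- q)" using valuation_minus[OF v False] v2 v2p by simp
    then show ?thesis using valuation_add_less[OF v, of "2 * p" "- q"] p0 False by simp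
  qed
  then have sp0: "s + p \<noteq> 0" and smp0: "s - p \<noteq> 0"
    and "v ((s + p) * (s - p)) = v (2 * p)"
    using prod by auto
  then have mean: "v (s + p) + v (s - p) = 2 * (3 * v 2 / 4)"
    using valuation_mult[OF v sp0 smp0] v2p by simp
  have "v (s + p) = 3 * v 2 / 4"
    by (rule valuation_eq_mean_if_close[OF v sp0 smp0 _ mean]) (use p0 v2 v2p in simp_all)
  with sp0 show ?thesis by simp
qed

theorem lemma7p1:
  fixes c :: int and v :: "'a::field_char_0 \<Rightarrow> real" and \<delta> \<alpha> \<beta> :: 'a
  assumes "c mod 4 = 1"
    and "nonarch_valuation v"
    and "v 2 = 8"
    and "\<delta>\<^sup>2 = - of_int c"
    and "\<alpha>\<^sup>2 = - of_int c + \<delta>"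
    and "\<beta>\<^sup>2 = - of_int c - \<delta>"
  shows "\<alpha> + \<alpha> * \<beta> + \<beta> \<noteq> 0 \<and> v (\<alpha> + \<alpha> * \<beta> + \<beta>) = 6"
proof -
  have "(\<alpha> * \<beta>)\<^sup>2 = (- of_int c + \<delta>) * (- of_int c - \<delta>)"
    using assms(5,6) by (simp add: power_mult_distrib)
  also have "\<dots> = of_int c * of_int (c + 1)"
    using assms(4) by (simp add: algebra_simps power2_eq_square)
  finally have "(\<alpha> * \<beta>)\<^sup>2 = of_int c * of_int (c + 1)" .
  moreover have "(\<alpha> + \<beta>)\<^sup>2 = \<alpha>\<^sup>2 + \<beta>\<^sup>2 + 2 * (\<alpha> * \<beta>)"
    by (simp add: power2_sum)
  then have "(\<alpha> + \<beta>)\<^sup>2 = 2 * (\<alpha> * \<beta> - of_int c)"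
    unfolding assms(5,6) by (simp add: algebra_simps)
  ultimately have "\<alpha> + \<beta> + \<alpha> * \<beta> \<noteq> 0 \<and> 4 * v (\<alpha> + \<beta> + \<alpha> * \<beta>) = 3 * v 2"
    using valuation_sum_plus_product[OF assms(1,2)] assms(3) by simp
  then show ?thesis using assms(3) by (simp add: ac_simps)
qed

end
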